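(* Let $X$ be a separable Banach space, $X\ne\{0\}$, and let $E_X$, $(e^X_n)$, $Q_X$ be as in the context. Let $(v_k)$ be a bounded block sequence of $(e^X_n)$. If $(Q_X(v_k))$ is weakly null in $X$, then $(v_k)$ is weakly null in $E_X$.
   Context: Given a separable Banach space $X\neq\{0\}$ and a sequence $(x_n)$ (repetitions allowed) in the unit sphere of $X$ which is norm dense in the unit sphere, $E_X$ is the completion of $c_{00}(\mathbb{N})$ under the norm $\|z\|_{E_X}=\sup_{m\in\mathbb{N}}\|\sum_{n=0}^m z(n)x_n\|_X$; $(e^X_n)$ is the standard unit vector basis of $c_{00}(\mathbb{N})$ viewed in $E_X$ (a normalized monotone Schauder basis of $E_X$); $Q_X:E_X\to X$ is the unique bounded linear operator with $Q_X(e^X_n)=x_n$. *)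

theory Defs
  imports "HOL-Analysis.Analysis"
begin

definition c00 :: "(nat \<Rightarrow> real) set" where
  "c00 = {z. finite {n. z n \<noteq> 0}}"

definition EX_norm :: "(nat \<Rightarrow> 'a::real_normed_vector) \<Rightarrow> (nat \<Rightarrow> real) \<Rightarrow> real" where
  "EX_norm x z = (SUP m. norm (\<Sum>n\<le>m. z n *\<^sub>R x n))"

definition QX :: "(nat \<Rightarrow> 'a::real_normed_vector) \<Rightarrow> (nat \<Rightarrow> real) \<Rightarrow> 'a" where
  "QX x z = (\<Sum>n\<in>{n. z n \<noteq> 0}. z n *\<^sub>R x n)"

definition block_seq :: "(nat \<Rightarrow> nat \<Rightarrow> real) \<Rightarrow> bool" where
  "block_seq v \<longleftrightarrow> (\<forall>k. v k \<in> c00 \<and> (\<exists>i. v k i \<noteq> 0)) \<and>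
     (\<forall>k i j. v k i \<noteq> 0 \<longrightarrow> v (Suc k) j \<noteq> 0 \<longrightarrow> i < j)"

text \<open>The dual of the completion E_X is exactly the space of
  linear functionals on the dense subspace c00 that are bounded for EX_norm
  (only their values on c00 matter).\<close>
definition EX_weakly_null :: "(nat \<Rightarrow> 'a::real_normed_vector) \<Rightarrow> (nat \<Rightarrow> nat \<Rightarrow> real) \<Rightarrow> bool" where
  "EX_weakly_null x v \<longleftrightarrow>
     (\<forall>\<phi> :: (nat \<Rightarrow> real) \<Rightarrow> real. \<forall>C.
        (\<forall>z\<in>c00. \<forall>w\<in>c00. \<phi> (\<lambda>n. z n + w n) = \<phi> z + \<phi> w) \<longrightarrow>
        (\<forall>z\<in>c00. \<forall>c. \<phi> (\<lambda>n. c * z n) = c * \<phi> z) \<longrightarrow> (\<forall>z\<in>c00. \<bar>\<phi> z\<bar> \<le> C * EX_norm x z) \<longrightarrow>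
        (\<lambda>k. \<phi> (v k)) \<longlonglongrightarrow> 0)"

definition weakly_null :: "(nat \<Rightarrow> 'a::real_normed_vector) \<Rightarrow> bool" where
  "weakly_null y \<longleftrightarrow> (\<forall>f :: 'a \<Rightarrow> real. bounded_linear f \<longrightarrow> (\<lambda>k. f (y k)) \<longlonglongrightarrow> 0)"

end

theory Submission
  imports Defs
begin

text \<open>Partial sums \<open>z \<mapsto> (\<Sum>n\<le>m. z n *\<^sub>R x n)\<^sub>m\<close> embed \<open>E\<^sub>X\<close> isometrically into \<open>\<ell>\<^sub>\<infinity>(X)\<close>, so by
  Hahn-Banach a bounded functional \<open>\<phi>\<close> on \<open>E\<^sub>X\<close> is the restriction of a bounded functional \<open>\<Phi>\<close>
  on \<open>\<ell>\<^sub>\<infinity>(X)\<close>. If the block \<open>v\<^sub>k\<close> is supported in \<open>[a\<^sub>k, b\<^sub>k]\<close>, its image is a piece supported in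
  \<open>[a\<^sub>k, b\<^sub>k]\<close> plus the sequence that equals \<open>Q\<^sub>X(v\<^sub>k)\<close> from \<open>b\<^sub>k + 1\<close> on. A bounded functional is
  absolutely summable along bounded sequences with disjoint supports (test it on a signed sum, whose
  sup norm does not grow), which disposes of the first pieces. The same fact makes the functionals
  \<open>y \<mapsto> \<Phi>(y \<cdot> 1\<^bsub>[N,\<infinity>)\<^esub>)\<close> Cauchy in norm, so on the second pieces \<open>\<Phi>\<close> is uniformly close to one
  fixed bounded functional on \<open>X\<close> evaluated at \<open>Q\<^sub>X(v\<^sub>k)\<close>, which tends to zero by weak nullness.\<close>

definition dominated_linear_graph :: "('v::real_vector \<Rightarrow> real) \<Rightarrow> ('v \<times> real) set \<Rightarrow> bool" where
  "dominated_linear_graph p G \<longleftrightarrow> single_valued G \<and>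
     (\<forall>x a y b. (x, a) \<in> G \<longrightarrow> (y, b) \<in> G \<longrightarrow> (x + y, a + b) \<in> G) \<and>
     (\<forall>x a c. (x, a) \<in> G \<longrightarrow> (c *\<^sub>R x, c * a) \<in> G) \<and>
     (\<forall>x a. (x, a) \<in> G \<longrightarrow> a \<le> p x)"

lemma dominated_linear_graph_Union_chain:
  assumes graphs: "\<And>G. G \<in> C \<Longrightarrow> dominated_linear_graph p G"
    and chain: "subset.chain \<A> C"
  shows "dominated_linear_graph p (\<Union>C)"
proof -
  have common: "\<exists>G\<in>C. u \<in> G \<and> w \<in> G" if "u \<in> \<Union>C" "w \<in> \<Union>C" for u w
    using that chain unfolding subset.chain_def by blast
  show ?thesis
    unfolding dominated_linear_graph_def single_valued_def
  proof (intro conjI allI impI)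
    fix x a b assume "(x, a) \<in> \<Union>C" "(x, b) \<in> \<Union>C"
    then obtain G where "G \<in> C" "(x, a) \<in> G" "(x, b) \<in> G" using common by blast
    then show "a = b"
      using graphs unfolding dominated_linear_graph_def single_valued_def by blast
  next
    fix x a y b assume "(x, a) \<in> \<Union>C" "(y, b) \<in> \<Union>C"
    then obtain G where "G \<in> C" "(x, a) \<in> G" "(y, b) \<in> G" using common by blast
    then show "(x + y, a + b) \<in> \<Union>C"
      using graphs unfolding dominated_linear_graph_def by blast
  next
    fix x a c assume "(x, a) \<in> \<Union>C"
    then show "(c *\<^sub>R x, c * a) \<in> \<Union>C"
      using graphs unfolding dominated_linear_graph_def by blast
  next
    fix x a assume "(x, a) \<in> \<Union>C"
    then show "a \<le> p x"
      using graphs unfolding dominated_linear_graph_def by blast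
  qed
qed

lemma dominated_linear_graphD:
  assumes "dominated_linear_graph p G"
  shows "\<And>x a b. (x, a) \<in> G \<Longrightarrow> (x, b) \<in> G \<Longrightarrow> a = b"
    and "\<And>x a y b. (x, a) \<in> G \<Longrightarrow> (y, b) \<in> G \<Longrightarrow> (x + y, a + b) \<in> G"
    and "\<And>x a c. (x, a) \<in> G \<Longrightarrow> (c *\<^sub>R x, c * a) \<in> G"
    and "\<And>x a. (x, a) \<in> G \<Longrightarrow> a \<le> p x"
  using assms unfolding dominated_linear_graph_def single_valued_def by blast+

text \<open>Domination on the sums \<open>u + w = (u - x0) + (w + x0)\<close> separates the lower bounds from the
  upper bounds that a value \<open>c\<close> at \<open>x0\<close> has to respect.\<close>
lemma dominated_linear_graph_separating_value:
  assumes p_add: "\<And>x y. p (x + y) \<le> p x + p y"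
    and G: "dominated_linear_graph p G" and zero: "(0, 0) \<in> G"
  obtains c where "\<And>u a. (u, a) \<in> G \<Longrightarrow> a - p (u - x0) \<le> c"
    and "\<And>w b. (w, b) \<in> G \<Longrightarrow> c \<le> p (w + x0) - b"
proof -
  have separated: "a - p (u - x0) \<le> p (w + x0) - b" if "(u, a) \<in> G" "(w, b) \<in> G" for u a w b
  proof -
    have "a + b \<le> p ((u - x0) + (w + x0))"
      using dominated_linear_graphD(2,4)[OF G] that by simp
    then show ?thesis using p_add[of "u - x0" "w + x0"] by linarith
  qed
  define L where "L = {a - p (u - x0) | u a. (u, a) \<in> G}"
  have "a - p (u - x0) \<le> Sup L" if "(u, a) \<in> G" for u a
    unfolding L_def using that separated[OF _ zero]
    by (intro cSup_upper) (auto simp: bdd_above_def)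
  moreover have "Sup L \<le> p (w + x0) - b" if "(w, b) \<in> G" for w b
    unfolding L_def using that zero separated by (intro cSup_least) auto
  ultimately show thesis by (rule that)
qed

lemma dominated_linear_graph_adjoin_le:
  fixes p :: "'v::real_vector \<Rightarrow> real"
  assumes p_scale: "\<And>c x. c > 0 \<Longrightarrow> p (c *\<^sub>R x) = c * p x"
    and G: "dominated_linear_graph p G" and ya: "(y, a) \<in> G"
    and c_ge: "\<And>u a. (u, a) \<in> G \<Longrightarrow> a - p (u - x0) \<le> c"
    and c_le: "\<And>w b. (w, b) \<in> G \<Longrightarrow> c \<le> p (w + x0) - b"
  shows "a + t * c \<le> p (y + t *\<^sub>R x0)"
proof -
  have scaled: "(inverse s *\<^sub>R y, inverse s * a) \<in> G" for s
    using dominated_linear_graphD(3)[OF G ya] .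
  consider "t > 0" | "t = 0" | "t < 0" by linarith
  then show ?thesis
  proof cases
    case 1
    have "t * c \<le> t * (p (inverse t *\<^sub>R y + x0) - inverse t * a)"
      using c_le[OF scaled] 1 by simp
    also have "\<dots> = p (t *\<^sub>R (inverse t *\<^sub>R y + x0)) - a"
      using p_scale[OF 1] 1 by (simp add: right_diff_distrib)
    also have "t *\<^sub>R (inverse t *\<^sub>R y + x0) = y + t *\<^sub>R x0" using 1 by (simp add: algebra_simps)
    finally show ?thesis by simp
  next
    case 2
    then show ?thesis using dominated_linear_graphD(4)[OF G ya] by simp
  next
    case 3
    define s where "s = - t"
    have "s > 0" using 3 unfolding s_def by simp
    have "s * (inverse s * a - p (inverse s *\<^sub>R y - x0)) \<le> s * c"
      using c_ge[OF scaled] \<open>s > 0\<close> by simp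
    moreover have "s * (inverse s * a - p (inverse s *\<^sub>R y - x0)) = a - p (s *\<^sub>R (inverse s *\<^sub>R y - x0))"
      using p_scale[OF \<open>s > 0\<close>] \<open>s > 0\<close> by (simp add: right_diff_distrib)
    moreover have "s *\<^sub>R (inverse s *\<^sub>R y - x0) = y + t *\<^sub>R x0"
      using \<open>s > 0\<close> by (simp add: algebra_simps s_def)
    ultimately show ?thesis by (simp add: s_def)
  qed
qed

lemma dominated_linear_graph_extend:
  fixes p :: "'v::real_vector \<Rightarrow> real"
  assumes p_add: "\<And>x y. p (x + y) \<le> p x + p y"
    and p_scale: "\<And>c x. c > 0 \<Longrightarrow> p (c *\<^sub>R x) = c * p x"
    and G: "dominated_linear_graph p G" and zero: "(0, 0) \<in> G"
    and x0: "x0 \<notin> Domain G"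
  obtains c where "dominated_linear_graph p {(y + t *\<^sub>R x0, a + t * c) | y a t. (y, a) \<in> G}"
proof -
  note G_single = dominated_linear_graphD(1)[OF G]
    and G_add = dominated_linear_graphD(2)[OF G]
    and G_scale = dominated_linear_graphD(3)[OF G]
  obtain c where c_ge: "\<And>u a. (u, a) \<in> G \<Longrightarrow> a - p (u - x0) \<le> c"
    and c_le: "\<And>w b. (w, b) \<in> G \<Longrightarrow> c \<le> p (w + x0) - b"
    using dominated_linear_graph_separating_value[OF p_add G zero] by blast
  define G' where "G' = {(y + t *\<^sub>R x0, a + t * c) | y a t. (y, a) \<in> G}"
  have "dominated_linear_graph p G'"
    unfolding dominated_linear_graph_def single_valued_def
  proof (intro conjI allI impI)
    fix x a b assume "(x, a) \<in> G'" "(x, b) \<in> G'"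
    then obtain y1 a1 t1 y2 a2 t2 where e: "x = y1 + t1 *\<^sub>R x0" "a = a1 + t1 * c" "(y1, a1) \<in> G"
        "x = y2 + t2 *\<^sub>R x0" "b = a2 + t2 * c" "(y2, a2) \<in> G"
      unfolding G'_def by blast
    have "t1 = t2"
    proof (rule ccontr)
      assume "t1 \<noteq> t2"
      have "(y1 + (-1) *\<^sub>R y2, a1 + (-1) * a2) \<in> G" using G_add[OF e(3) G_scale[OF e(6)]] .
      from G_scale[OF this, of "inverse (t2 - t1)"]
      have "(inverse (t2 - t1) *\<^sub>R (y1 - y2), inverse (t2 - t1) * (a1 - a2)) \<in> G" by simp
      moreover have "y1 - y2 = (t2 - t1) *\<^sub>R x0" using e(1,4) by (simp add: algebra_simps)
      ultimately show False using x0 \<open>t1 \<noteq> t2\<close> by (auto simp: Domain_iff)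
    qed
    then show "a = b" using e G_single by auto
  next
    fix x a y b assume "(x, a) \<in> G'" "(y, b) \<in> G'"
    then obtain y1 a1 t1 y2 a2 t2 where e: "x = y1 + t1 *\<^sub>R x0" "a = a1 + t1 * c" "(y1, a1) \<in> G"
        "y = y2 + t2 *\<^sub>R x0" "b = a2 + t2 * c" "(y2, a2) \<in> G"
      unfolding G'_def by blast
    have "x + y = (y1 + y2) + (t1 + t2) *\<^sub>R x0" "a + b = (a1 + a2) + (t1 + t2) * c"
      using e by (simp_all add: algebra_simps)
    then show "(x + y, a + b) \<in> G'" unfolding G'_def using G_add[OF e(3) e(6)] by blast
  next
    fix x a r assume "(x, a) \<in> G'"
    then obtain y1 a1 t1 where e: "x = y1 + t1 *\<^sub>R x0" "a = a1 + t1 * c" "(y1, a1) \<in> G"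
      unfolding G'_def by blast
    have "r *\<^sub>R x = r *\<^sub>R y1 + (r * t1) *\<^sub>R x0" "r * a = r * a1 + (r * t1) * c"
      using e by (simp_all add: algebra_simps)
    then show "(r *\<^sub>R x, r * a) \<in> G'" unfolding G'_def using G_scale[OF e(3)] by blast
  next
    fix x a assume "(x, a) \<in> G'"
    then show "a \<le> p x"
      unfolding G'_def
      using dominated_linear_graph_adjoin_le[OF p_scale G _ c_ge c_le] by blast
  qed
  then show thesis using that unfolding G'_def by blast
qed

lemma hahn_banach:
  fixes p :: "'v::real_vector \<Rightarrow> real" and f :: "'v \<Rightarrow> real"
  assumes p_add: "\<And>x y. p (x + y) \<le> p x + p y"
    and p_scale: "\<And>c x. c > 0 \<Longrightarrow> p (c *\<^sub>R x) = c * p x"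
    and S: "subspace S"
    and f_add: "\<And>x y. x \<in> S \<Longrightarrow> y \<in> S \<Longrightarrow> f (x + y) = f x + f y"
    and f_scale: "\<And>c x. x \<in> S \<Longrightarrow> f (c *\<^sub>R x) = c * f x"
    and f_le: "\<And>x. x \<in> S \<Longrightarrow> f x \<le> p x"
  obtains F where "linear F" "\<And>x. x \<in> S \<Longrightarrow> F x = f x" "\<And>x. F x \<le> p x"
proof -
  define graph_f where "graph_f = (\<lambda>x. (x, f x)) ` S"
  define A where "A = {G. dominated_linear_graph p G \<and> graph_f \<subseteq> G}"
  have "dominated_linear_graph p graph_f"
    unfolding dominated_linear_graph_def single_valued_def graph_f_def
  proof (intro conjI allI impI)
    fix x a y b assume "(x, a) \<in> (\<lambda>x. (x, f x)) ` S" "(y, b) \<in> (\<lambda>x. (x, f x)) ` S"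
    then show "(x + y, a + b) \<in> (\<lambda>x. (x, f x)) ` S"
      using f_add subspace_add[OF S] by (auto intro!: image_eqI)
  next
    fix x a c assume "(x, a) \<in> (\<lambda>x. (x, f x)) ` S"
    then show "(c *\<^sub>R x, c * a) \<in> (\<lambda>x. (x, f x)) ` S"
      using f_scale subspace_scale[OF S] by (auto intro!: image_eqI)
  qed (use f_le in auto)
  then have graph_f_A: "graph_f \<in> A" unfolding A_def by simp
  have "\<exists>M\<in>A. \<forall>G\<in>A. M \<subseteq> G \<longrightarrow> G = M"
  proof (rule subset_Zorn_nonempty)
    fix C assume "C \<noteq> {}" and chain: "subset.chain A C"
    then have "C \<subseteq> A" by (simp add: subset.chain_def)
    then have "dominated_linear_graph p (\<Union>C)"
      using chain by (intro dominated_linear_graph_Union_chain) (auto simp: A_def)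
    moreover have "graph_f \<subseteq> \<Union>C" using \<open>C \<noteq> {}\<close> \<open>C \<subseteq> A\<close> by (auto simp: A_def)
    ultimately show "\<Union>C \<in> A" by (simp add: A_def)
  qed (use graph_f_A in blast)
  then obtain M where "M \<in> A" and max: "\<And>G. G \<in> A \<Longrightarrow> M \<subseteq> G \<Longrightarrow> G = M" by blast
  then have M: "dominated_linear_graph p M" "graph_f \<subseteq> M" by (simp_all add: A_def)
  have M_max: "G = M" if "dominated_linear_graph p G" "M \<subseteq> G" for G
    using max[of G] that M(2) by (simp add: A_def)
  note M_single = dominated_linear_graphD(1)[OF M(1)]
    and M_add = dominated_linear_graphD(2)[OF M(1)]
    and M_scale = dominated_linear_graphD(3)[OF M(1)]
    and M_le = dominated_linear_graphD(4)[OF M(1)]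
  have M_S: "(x, f x) \<in> M" if "x \<in> S" for x using M(2) that unfolding graph_f_def by blast
  have M_zero: "(0, 0) \<in> M" using M_scale[OF M_S[OF subspace_0[OF S]], of 0] by simp
  have M_total: "x0 \<in> Domain M" for x0
  proof (rule ccontr)
    assume "x0 \<notin> Domain M"
    then obtain c where G': "dominated_linear_graph p {(y + t *\<^sub>R x0, a + t * c) | y a t. (y, a) \<in> M}"
      using dominated_linear_graph_extend[OF p_add p_scale M(1) M_zero] by blast
    have "(y, a) \<in> {(y + t *\<^sub>R x0, a + t * c) | y a t. (y, a) \<in> M}" if "(y, a) \<in> M" for y a
      using that by (intro CollectI exI[of _ y] exI[of _ a] exI[of _ 0]) simp
    then have "M \<subseteq> {(y + t *\<^sub>R x0, a + t * c) | y a t. (y, a) \<in> M}" by auto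
    then have "{(y + t *\<^sub>R x0, a + t * c) | y a t. (y, a) \<in> M} = M" using M_max[OF G'] by blast
    moreover have "(0 + 1 *\<^sub>R x0, 0 + 1 * c) \<in> {(y + t *\<^sub>R x0, a + t * c) | y a t. (y, a) \<in> M}"
      using M_zero by blast
    ultimately show False using \<open>x0 \<notin> Domain M\<close> by (simp add: Domain_iff)
  qed
  define F where "F x = (THE a. (x, a) \<in> M)" for x
  have F_eq: "F x = a" if "(x, a) \<in> M" for x a
    unfolding F_def using that by (rule the_equality) (use M_single that in blast)
  have F_M: "(x, F x) \<in> M" for x using M_total[of x] F_eq by blast
  have "linear F"
    by (rule linearI) (simp_all add: F_eq M_add M_scale F_M)
  then show thesis using that F_eq M_S M_le F_M by blast
qed

lemma hahn_banach_normed: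
  fixes f :: "'v::real_normed_vector \<Rightarrow> real"
  assumes S: "subspace S" and "C \<ge> 0"
    and f_add: "\<And>x y. x \<in> S \<Longrightarrow> y \<in> S \<Longrightarrow> f (x + y) = f x + f y"
    and f_scale: "\<And>c x. x \<in> S \<Longrightarrow> f (c *\<^sub>R x) = c * f x"
    and f_bound: "\<And>x. x \<in> S \<Longrightarrow> \<bar>f x\<bar> \<le> C * norm x"
  obtains F where "linear F" "\<And>x. x \<in> S \<Longrightarrow> F x = f x" "\<And>x. \<bar>F x\<bar> \<le> C * norm x"
proof -
  obtain F where F: "linear F" "\<And>x. x \<in> S \<Longrightarrow> F x = f x" and F_le: "\<And>x. F x \<le> C * norm x"
  proof (rule hahn_banach[of "\<lambda>x. C * norm x" S f])
    show "C * norm (x + y) \<le> C * norm x + C * norm y" for x y :: 'v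
      using mult_left_mono[OF norm_triangle_ineq \<open>C \<ge> 0\<close>] by (simp add: distrib_left)
    show "C * norm (c *\<^sub>R x) = c * (C * norm x)" if "c > 0" for c and x :: 'v
      using that by simp
    show "f x \<le> C * norm x" if "x \<in> S" for x
      using f_bound[OF that] by linarith
  qed (use S f_add f_scale in auto)
  have "\<bar>F x\<bar> \<le> C * norm x" for x
    using F_le[of x] F_le[of "- x"] linear_neg[OF F(1), of x] by simp
  with F show thesis using that by blast
qed

lemma bcontfun_sum_apply:
  "apply_bcontfun (\<Sum>j\<in>J. w j) m = (\<Sum>j\<in>J. apply_bcontfun (w j) m)"
  by (induction J rule: infinite_finite_induct) auto

lemma sum_abs_functional_disjoint_supports_le:
  fixes w :: "nat \<Rightarrow> ('b::topological_space \<Rightarrow>\<^sub>C 'a::real_normed_vector)"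
    and \<Phi> :: "('b \<Rightarrow>\<^sub>C 'a) \<Rightarrow> real"
  assumes \<Phi>: "linear \<Phi>" "\<And>u. \<bar>\<Phi> u\<bar> \<le> C * norm u" "C \<ge> 0"
    and supp: "\<And>j m. m \<notin> I j \<Longrightarrow> apply_bcontfun (w j) m = 0"
    and disj: "disjoint_family I"
    and bound: "\<And>j m. norm (apply_bcontfun (w j) m) \<le> B"
  shows "(\<Sum>j<J. \<bar>\<Phi> (w j)\<bar>) \<le> C * B"
proof -
  have "B \<ge> 0" using bound[of 0 undefined] norm_ge_zero order_trans by blast
  define W where "W = (\<Sum>j<J. sgn (\<Phi> (w j)) *\<^sub>R w j)"
  have "norm (apply_bcontfun W m) \<le> B" for m
  proof (cases "\<exists>j. m \<in> I j")
    case False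
    then show ?thesis using \<open>B \<ge> 0\<close> supp by (simp add: W_def bcontfun_sum_apply)
  next
    case True
    then obtain j0 where "m \<in> I j0" by blast
    then have "apply_bcontfun (w j) m = 0" if "j \<noteq> j0" for j
      using supp disj that unfolding disjoint_family_on_def by blast
    then have "apply_bcontfun W m = (if j0 < J then sgn (\<Phi> (w j0)) *\<^sub>R apply_bcontfun (w j0) m else 0)"
      unfolding W_def bcontfun_sum_apply by (auto intro!: sum.neutral simp: sum.remove[of _ j0])
    also have "norm \<dots> \<le> B"
      using bound[of j0 m] \<open>B \<ge> 0\<close> by (auto simp: abs_sgn_eq)
    finally show ?thesis .
  qed
  then have "norm W \<le> B" by (rule norm_bound)
  have "(\<Sum>j<J. \<bar>\<Phi> (w j)\<bar>) = \<Phi> W"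
    unfolding W_def using \<Phi>(1) by (simp add: linear_sum linear_scale abs_sgn[symmetric] mult.commute)
  also have "\<dots> \<le> C * norm W" using \<Phi>(2)[of W] by simp
  also have "\<dots> \<le> C * B" using \<open>norm W \<le> B\<close> \<Phi>(3) by (rule mult_left_mono)
  finally show ?thesis .
qed

lemma functional_disjoint_supports_tendsto_zero:
  fixes w :: "nat \<Rightarrow> ('b::topological_space \<Rightarrow>\<^sub>C 'a::real_normed_vector)"
    and \<Phi> :: "('b \<Rightarrow>\<^sub>C 'a) \<Rightarrow> real"
  assumes \<Phi>: "linear \<Phi>" "\<And>u. \<bar>\<Phi> u\<bar> \<le> C * norm u" "C \<ge> 0"
    and supp: "\<And>j m. m \<notin> I j \<Longrightarrow> apply_bcontfun (w j) m = 0"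
    and disj: "disjoint_family I"
    and bound: "\<And>j m. norm (apply_bcontfun (w j) m) \<le> B"
  shows "(\<lambda>j. \<Phi> (w j)) \<longlonglongrightarrow> 0"
proof -
  have "summable (\<lambda>j. \<bar>\<Phi> (w j)\<bar>)"
    using sum_abs_functional_disjoint_supports_le[OF assms] by (intro summableI_nonneg_bounded) auto
  then show ?thesis using summable_LIMSEQ_zero tendsto_rabs_zero_iff by blast
qed

definition const_from :: "nat \<Rightarrow> 'a::real_normed_vector \<Rightarrow> (nat \<Rightarrow>\<^sub>C 'a)" where
  "const_from N y = Bcontfun (\<lambda>m. if N \<le> m then y else 0)"

lemma const_from_apply: "apply_bcontfun (const_from N y) m = (if N \<le> m then y else 0)"
proof -
  have "(\<lambda>m. if N \<le> m then y else 0) \<in> bcontfun"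
    by (rule bcontfun_normI[of _ "norm y"]) auto
  then show ?thesis unfolding const_from_def by (simp add: Bcontfun_inverse)
qed

lemma const_from_add: "const_from N (y + z) = const_from N y + const_from N z"
  by (rule bcontfun_eqI) (simp add: const_from_apply)

lemma const_from_scale: "const_from N (c *\<^sub>R y) = c *\<^sub>R const_from N y"
  by (rule bcontfun_eqI) (simp add: const_from_apply)

lemma norm_const_from_le: "norm (const_from N y) \<le> norm y"
  by (rule norm_bound) (simp add: const_from_apply)

lemma disjoint_intervals_from_cofinal:
  assumes "\<And>N0. \<exists>N N'. N0 \<le> N \<and> N < N' \<and> P N N'"
  obtains lo hi :: "nat \<Rightarrow> nat"
  where "\<And>j. lo j < hi j" "\<And>j. P (lo j) (hi j)" "disjoint_family (\<lambda>j. {lo j..<hi j})"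
proof -
  have "\<forall>N0. \<exists>I. N0 \<le> fst I \<and> fst I < snd I \<and> P (fst I) (snd I)"
  proof
    fix N0
    obtain N N' where "N0 \<le> N" "N < N'" "P N N'" using assms by blast
    then show "\<exists>I. N0 \<le> fst I \<and> fst I < snd I \<and> P (fst I) (snd I)" by (intro exI[of _ "(N, N')"]) simp
  qed
  from choice[OF this] obtain G
    where G: "\<And>N0. N0 \<le> fst (G N0) \<and> fst (G N0) < snd (G N0) \<and> P (fst (G N0)) (snd (G N0))"
    by blast
  define s where "s = rec_nat 0 (\<lambda>_ N0. snd (G N0))"
  define lo where "lo j = fst (G (s j))" for j
  define hi where "hi j = s (Suc j)" for j
  have lo_hi: "s j \<le> lo j" "lo j < hi j" "P (lo j) (hi j)" for j
    using G[of "s j"] unfolding lo_def hi_def s_def by simp_all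
  have "mono s"
    using lo_hi(1,2) unfolding hi_def by (intro incseq_SucI) (meson less_imp_le order_trans)
  have "hi j \<le> lo j'" if "j < j'" for j j'
  proof -
    have "s (Suc j) \<le> s j'" using \<open>mono s\<close> that by (simp add: monoD)
    then show ?thesis using lo_hi(1)[of j'] unfolding hi_def by simp
  qed
  then have "{lo j..<hi j} \<inter> {lo j'..<hi j'} = {}" if "j < j'" for j j'
    using that by fastforce
  then have "disjoint_family (\<lambda>j. {lo j..<hi j})"
    unfolding disjoint_family_on_def by (metis Int_commute linorder_neqE_nat)
  then show thesis using that lo_hi(2,3) by blast
qed

lemma functional_const_from_unit_witness:
  fixes \<Phi> :: "(nat \<Rightarrow>\<^sub>C 'a::real_normed_vector) \<Rightarrow> real"
  assumes "linear \<Phi>" and "\<delta> \<ge> 0"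
    and gt: "\<delta> * norm y < \<bar>\<Phi> (const_from N y) - \<Phi> (const_from N' y)\<bar>"
  shows "min N N' < max N N' \<and>
    (\<exists>u. norm u = 1 \<and> \<delta> < \<bar>\<Phi> (const_from (min N N') u) - \<Phi> (const_from (max N N') u)\<bar>)"
proof -
  have "N \<noteq> N'" using gt \<open>\<delta> \<ge> 0\<close> by (smt (verit) norm_ge_zero zero_le_mult_iff)
  have "y \<noteq> 0"
    using gt const_from_scale[of _ 0 y] linear_0[OF \<open>linear \<Phi>\<close>] by auto
  have "\<bar>\<Phi> (const_from N (y /\<^sub>R norm y)) - \<Phi> (const_from N' (y /\<^sub>R norm y))\<bar>
      = \<bar>\<Phi> (const_from N y) - \<Phi> (const_from N' y)\<bar> / norm y"
    by (simp add: const_from_scale linear_scale[OF \<open>linear \<Phi>\<close>] right_diff_distrib[symmetric]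
        abs_mult divide_inverse_commute)
  also have "\<delta> < \<dots>" using gt \<open>y \<noteq> 0\<close> by (simp add: field_simps)
  finally have "\<delta> < \<bar>\<Phi> (const_from N (y /\<^sub>R norm y)) - \<Phi> (const_from N' (y /\<^sub>R norm y))\<bar>" .
  then show ?thesis
    using \<open>N \<noteq> N'\<close> \<open>y \<noteq> 0\<close>
    by (cases "N < N'") (auto simp: min_def max_def abs_minus_commute intro!: exI[of _ "y /\<^sub>R norm y"])
qed

lemma functional_const_from_Cauchy:
  fixes \<Phi> :: "(nat \<Rightarrow>\<^sub>C 'a::real_normed_vector) \<Rightarrow> real"
  assumes \<Phi>: "linear \<Phi>" "\<And>u. \<bar>\<Phi> u\<bar> \<le> C * norm u" "C \<ge> 0" and "\<delta> > 0"
  shows "\<exists>N0. \<forall>N\<ge>N0. \<forall>N'\<ge>N0. \<forall>y. \<bar>\<Phi> (const_from N y) - \<Phi> (const_from N' y)\<bar> \<le> \<delta> * norm y"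
proof (rule ccontr)
  assume not_Cauchy: "\<not> ?thesis"
  define P where "P N N' \<longleftrightarrow> (\<exists>y. norm y = 1 \<and> \<delta> < \<bar>\<Phi> (const_from N y) - \<Phi> (const_from N' y)\<bar>)"
    for N N'
  have "\<exists>N N'. N0 \<le> N \<and> N < N' \<and> P N N'" for N0
  proof -
    have "\<exists>N\<ge>N0. \<exists>N'\<ge>N0. \<exists>y. \<delta> * norm y < \<bar>\<Phi> (const_from N y) - \<Phi> (const_from N' y)\<bar>"
      using not_Cauchy by (auto simp: not_le)
    then obtain N N' y where "N0 \<le> N" "N0 \<le> N'"
      and "\<delta> * norm y < \<bar>\<Phi> (const_from N y) - \<Phi> (const_from N' y)\<bar>"
      by blast
    then show ?thesis
      using functional_const_from_unit_witness[OF \<Phi>(1) less_imp_le[OF \<open>\<delta> > 0\<close>]] unfolding P_def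
      by (intro exI[of _ "min N N'"] exI[of _ "max N N'"]) auto
  qed
  then obtain lo hi :: "nat \<Rightarrow> nat" where lo_hi: "\<And>j. lo j < hi j" "\<And>j. P (lo j) (hi j)"
    and disj: "disjoint_family (\<lambda>j. {lo j..<hi j})"
    by (rule disjoint_intervals_from_cofinal) auto
  then obtain y where y: "\<And>j. norm (y j) = 1"
    and big: "\<And>j. \<delta> < \<bar>\<Phi> (const_from (lo j) (y j)) - \<Phi> (const_from (hi j) (y j))\<bar>"
    unfolding P_def by metis
  define w where "w j = const_from (lo j) (y j) - const_from (hi j) (y j)" for j
  have w_apply: "apply_bcontfun (w j) m = (if m \<in> {lo j..<hi j} then y j else 0)" for j m
    using lo_hi(1)[of j] unfolding w_def by (simp add: const_from_apply)
  have "(\<lambda>j. \<Phi> (w j)) \<longlonglongrightarrow> 0"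
    by (rule functional_disjoint_supports_tendsto_zero[OF \<Phi> _ disj, where B = 1])
      (auto simp: w_apply y)
  then obtain j where "\<bar>\<Phi> (w j)\<bar> < \<delta>"
    using LIMSEQ_D[OF _ \<open>\<delta> > 0\<close>] by fastforce
  then show False using big[of j] unfolding w_def linear_diff[OF \<Phi>(1)] by simp
qed

lemma functional_const_from_weakly_null:
  fixes \<Phi> :: "(nat \<Rightarrow>\<^sub>C 'a::real_normed_vector) \<Rightarrow> real" and Q :: "nat \<Rightarrow> 'a"
  assumes \<Phi>: "linear \<Phi>" "\<And>u. \<bar>\<Phi> u\<bar> \<le> C * norm u" "C \<ge> 0"
    and Q: "weakly_null Q" "\<And>k. norm (Q k) \<le> M"
    and N: "filterlim N sequentially sequentially"
  shows "(\<lambda>k. \<Phi> (const_from (N k) (Q k))) \<longlonglongrightarrow> 0"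
proof (rule tendstoI)
  fix r :: real assume "r > 0"
  have "M \<ge> 0" using Q(2)[of 0] norm_ge_zero order_trans by blast
  define \<delta> where "\<delta> = r / (2 * (M + 1))"
  have "\<delta> > 0" unfolding \<delta>_def using \<open>r > 0\<close> \<open>M \<ge> 0\<close> by simp
  have "\<delta> * M < r / 2"
    unfolding \<delta>_def using \<open>r > 0\<close> \<open>M \<ge> 0\<close> by (simp add: field_simps)
  obtain N0 where N0: "\<And>N y. N \<ge> N0 \<Longrightarrow> \<bar>\<Phi> (const_from N y) - \<Phi> (const_from N0 y)\<bar> \<le> \<delta> * norm y"
    using functional_const_from_Cauchy[OF \<Phi> \<open>\<delta> > 0\<close>] by blast
  have "bounded_linear (\<lambda>y. \<Phi> (const_from N0 y))"
  proof (rule bounded_linear_intro[of _ C])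
    show "\<Phi> (const_from N0 (y + z)) = \<Phi> (const_from N0 y) + \<Phi> (const_from N0 z)" for y z
      by (simp add: const_from_add linear_add[OF \<Phi>(1)])
    show "\<Phi> (const_from N0 (c *\<^sub>R y)) = c *\<^sub>R \<Phi> (const_from N0 y)" for c y
      by (simp add: const_from_scale linear_scale[OF \<Phi>(1)])
    show "norm (\<Phi> (const_from N0 y)) \<le> norm y * C" for y
      using order_trans[OF \<Phi>(2) mult_left_mono[OF norm_const_from_le \<Phi>(3)]]
      by (simp add: mult.commute)
  qed
  then have "(\<lambda>k. \<Phi> (const_from N0 (Q k))) \<longlonglongrightarrow> 0"
    using Q(1) unfolding weakly_null_def by blast
  then have "\<forall>\<^sub>F k in sequentially. \<bar>\<Phi> (const_from N0 (Q k))\<bar> < r / 2"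
    using \<open>r > 0\<close> by (intro order_tendstoD(2)[OF tendsto_rabs_zero]) simp_all
  moreover have "\<forall>\<^sub>F k in sequentially. N k \<ge> N0"
    using N by (simp add: filterlim_at_top)
  ultimately show "\<forall>\<^sub>F k in sequentially. dist (\<Phi> (const_from (N k) (Q k))) 0 < r"
  proof eventually_elim
    case (elim k)
    have "\<bar>\<Phi> (const_from (N k) (Q k)) - \<Phi> (const_from N0 (Q k))\<bar> \<le> \<delta> * M"
      using N0[OF elim(2), of "Q k"] mult_left_mono[OF Q(2)[of k] less_imp_le[OF \<open>\<delta> > 0\<close>]] by linarith
    then show ?case using elim(1) \<open>\<delta> * M < r / 2\<close> by (simp add: dist_real_def)
  qed
qed

definition partial_sums :: "(nat \<Rightarrow> 'a::real_normed_vector) \<Rightarrow> (nat \<Rightarrow> real) \<Rightarrow> nat \<Rightarrow> 'a" where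
  "partial_sums x z m = (\<Sum>n\<le>m. z n *\<^sub>R x n)"

lemma partial_sums_eq_QX:
  assumes "\<And>n. z n \<noteq> 0 \<Longrightarrow> n \<le> m"
  shows "partial_sums x z m = QX x z"
  unfolding partial_sums_def QX_def using assms by (intro sum.mono_neutral_right) auto

lemma partial_sums_eq_0:
  assumes "\<And>n. z n \<noteq> 0 \<Longrightarrow> a \<le> n" and "m < a"
  shows "partial_sums x z m = 0"
  unfolding partial_sums_def using assms by (intro sum.neutral) force

lemma partial_sums_add: "partial_sums x (\<lambda>n. z n + w n) m = partial_sums x z m + partial_sums x w m"
  unfolding partial_sums_def by (simp add: sum.distrib scaleR_add_left)

lemma partial_sums_scale: "partial_sums x (\<lambda>n. c * z n) m = c *\<^sub>R partial_sums x z m"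
  unfolding partial_sums_def by (simp add: scaleR_sum_right)

lemma c00_iff_bounded_support: "z \<in> c00 \<longleftrightarrow> (\<exists>b. \<forall>n. z n \<noteq> 0 \<longrightarrow> n \<le> b)"
  unfolding c00_def by (simp add: finite_nat_set_iff_bounded_le)

lemma c00_add: "z \<in> c00 \<Longrightarrow> w \<in> c00 \<Longrightarrow> (\<lambda>n. z n + w n) \<in> c00"
proof -
  have "{n. z n + w n \<noteq> 0} \<subseteq> {n. z n \<noteq> 0} \<union> {n. w n \<noteq> 0}" by auto
  then show "z \<in> c00 \<Longrightarrow> w \<in> c00 \<Longrightarrow> (\<lambda>n. z n + w n) \<in> c00"
    unfolding c00_def by (auto intro: finite_subset)
qed

lemma c00_scale: "z \<in> c00 \<Longrightarrow> (\<lambda>n. c * z n) \<in> c00"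
  unfolding c00_def by (auto elim!: finite_subset[rotated])

lemma bounded_range_partial_sums:
  assumes "z \<in> c00"
  shows "bounded (range (partial_sums x z))"
proof -
  obtain b where b: "\<And>n. z n \<noteq> 0 \<Longrightarrow> n \<le> b" using assms c00_iff_bounded_support by blast
  have "partial_sums x z m \<in> partial_sums x z ` {..b}" for m
  proof (cases "b \<le> m")
    case True
    then have "partial_sums x z m = partial_sums x z b"
      using b partial_sums_eq_QX[of z] by (metis order_trans)
    then show ?thesis by auto
  qed auto
  then have "range (partial_sums x z) \<subseteq> partial_sums x z ` {..b}" by blast
  then show ?thesis by (meson bounded_subset finite_atMost finite_imageI finite_imp_bounded)
qed

text \<open>Bounded functions \<open>nat \<Rightarrow>\<^sub>C 'a\<close> with the sup norm play the role of \<open>\<ell>\<^sub>\<infinity>(X)\<close>.\<close>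
definition partial_sums_bcf :: "(nat \<Rightarrow> 'a::real_normed_vector) \<Rightarrow> (nat \<Rightarrow> real) \<Rightarrow> (nat \<Rightarrow>\<^sub>C 'a)" where
  "partial_sums_bcf x z = Bcontfun (partial_sums x z)"

lemma partial_sums_bcf_apply: "z \<in> c00 \<Longrightarrow> apply_bcontfun (partial_sums_bcf x z) = partial_sums x z"
  unfolding partial_sums_bcf_def
  by (rule Bcontfun_inverse) (simp add: bcontfun_def bounded_range_partial_sums)

lemma norm_partial_sums_bcf: "z \<in> c00 \<Longrightarrow> norm (partial_sums_bcf x z) = EX_norm x z"
  unfolding norm_bcontfun_def dist_bcontfun.rep_eq EX_norm_def
  by (simp add: partial_sums_bcf_apply partial_sums_def)

lemma norm_partial_sums_le_EX_norm: "z \<in> c00 \<Longrightarrow> norm (partial_sums x z m) \<le> EX_norm x z"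
  using norm_bounded[of "partial_sums_bcf x z" m] by (simp add: partial_sums_bcf_apply norm_partial_sums_bcf)

lemma partial_sums_bcf_add:
  "z \<in> c00 \<Longrightarrow> w \<in> c00 \<Longrightarrow> partial_sums_bcf x (\<lambda>n. z n + w n) = partial_sums_bcf x z + partial_sums_bcf x w"
  by (rule bcontfun_eqI) (simp add: partial_sums_bcf_apply c00_add partial_sums_add)

lemma partial_sums_bcf_scale: "z \<in> c00 \<Longrightarrow> partial_sums_bcf x (\<lambda>n. c * z n) = c *\<^sub>R partial_sums_bcf x z"
  by (rule bcontfun_eqI) (simp add: partial_sums_bcf_apply c00_scale partial_sums_scale)

lemma partial_sums_bcf_minus_const_from:
  assumes supp: "\<And>n. z n \<noteq> 0 \<Longrightarrow> a \<le> n \<and> n \<le> b"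
  shows "apply_bcontfun (partial_sums_bcf x z - const_from (Suc b) (QX x z)) m
    = (if a \<le> m \<and> m \<le> b then partial_sums x z m else 0)"
proof -
  have "z \<in> c00" using supp c00_iff_bounded_support by blast
  have "partial_sums x z m = QX x z" if "b < m"
    using supp that by (intro partial_sums_eq_QX) force
  moreover have "partial_sums x z m = 0" if "m < a"
    using supp that by (intro partial_sums_eq_0) auto
  ultimately show ?thesis
    by (auto simp: partial_sums_bcf_apply[OF \<open>z \<in> c00\<close>] const_from_apply)
qed

lemma EX_functional_extends_to_bcontfun:
  fixes x :: "nat \<Rightarrow> 'a::real_normed_vector" and \<phi> :: "(nat \<Rightarrow> real) \<Rightarrow> real"
  assumes \<phi>_add: "\<forall>z\<in>c00. \<forall>w\<in>c00. \<phi> (\<lambda>n. z n + w n) = \<phi> z + \<phi> w"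
    and \<phi>_scale: "\<forall>z\<in>c00. \<forall>c. \<phi> (\<lambda>n. c * z n) = c * \<phi> z"
    and \<phi>_bound: "\<forall>z\<in>c00. \<bar>\<phi> z\<bar> \<le> C * EX_norm x z"
  obtains \<Phi> where "linear \<Phi>" "\<And>u. \<bar>\<Phi> u\<bar> \<le> \<bar>C\<bar> * norm u"
    "\<And>z. z \<in> c00 \<Longrightarrow> \<Phi> (partial_sums_bcf x z) = \<phi> z"
proof -
  have bound: "\<bar>\<phi> z\<bar> \<le> \<bar>C\<bar> * norm (partial_sums_bcf x z)" if "z \<in> c00" for z
    using \<phi>_bound that norm_partial_sums_bcf[OF that, of x]
    by (smt (verit) mult_right_mono norm_ge_zero)
  define S where "S = partial_sums_bcf x ` c00"
  have "subspace S"
    unfolding subspace_def S_def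
  proof (intro conjI ballI allI)
    have "(\<lambda>n. 0) \<in> c00" by (simp add: c00_def)
    moreover have "partial_sums_bcf x (\<lambda>n. 0) = 0"
      using partial_sums_bcf_scale[OF \<open>(\<lambda>n. 0) \<in> c00\<close>, of x 0] by simp
    ultimately show "0 \<in> partial_sums_bcf x ` c00" by force
  next
    fix u u' assume "u \<in> partial_sums_bcf x ` c00" "u' \<in> partial_sums_bcf x ` c00"
    then show "u + u' \<in> partial_sums_bcf x ` c00"
      by (auto simp flip: partial_sums_bcf_add intro!: imageI c00_add)
  next
    fix c u assume "u \<in> partial_sums_bcf x ` c00"
    then show "c *\<^sub>R u \<in> partial_sums_bcf x ` c00"
      by (auto simp flip: partial_sums_bcf_scale intro!: imageI c00_scale)
  qed
  text \<open>\<open>\<phi>\<close> factors through the embedding, because \<open>\<phi>\<close> vanishes on its kernel by the bound.\<close>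
  have factor: "\<phi> z = \<phi> w" if "z \<in> c00" "w \<in> c00" "partial_sums_bcf x z = partial_sums_bcf x w" for z w
  proof -
    define w' where "w' = (\<lambda>n. (-1) * w n)"
    have "w' \<in> c00" unfolding w'_def using c00_scale that(2) by blast
    have "partial_sums_bcf x w' = - partial_sums_bcf x w"
      unfolding w'_def using partial_sums_bcf_scale[OF that(2), of x "-1"] by simp
    then have "partial_sums_bcf x (\<lambda>n. z n + w' n) = 0"
      using partial_sums_bcf_add[OF that(1) \<open>w' \<in> c00\<close>, of x] that(3) by simp
    then have "\<phi> (\<lambda>n. z n + w' n) = 0"
      using bound[OF c00_add[OF that(1) \<open>w' \<in> c00\<close>]] by simp
    moreover have "\<phi> (\<lambda>n. z n + w' n) = \<phi> z + \<phi> w'" using \<phi>_add that(1) \<open>w' \<in> c00\<close> by blast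
    moreover have "\<phi> w' = - \<phi> w" unfolding w'_def using \<phi>_scale that(2) by (metis mult_minus1)
    ultimately show ?thesis by simp
  qed
  define f where "f u = \<phi> (SOME z. z \<in> c00 \<and> partial_sums_bcf x z = u)" for u
  have f: "f (partial_sums_bcf x z) = \<phi> z" if "z \<in> c00" for z
  proof -
    have "\<exists>z'. z' \<in> c00 \<and> partial_sums_bcf x z' = partial_sums_bcf x z" using that by blast
    from someI_ex[OF this] show ?thesis unfolding f_def using factor that by blast
  qed
  obtain \<Phi> where "linear \<Phi>" "\<And>u. u \<in> S \<Longrightarrow> \<Phi> u = f u" "\<And>u. \<bar>\<Phi> u\<bar> \<le> \<bar>C\<bar> * norm u"
  proof (rule hahn_banach_normed[OF \<open>subspace S\<close>, of "\<bar>C\<bar>" f])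
    show "f (u + u') = f u + f u'" if "u \<in> S" "u' \<in> S" for u u'
      using that \<phi>_add by (auto simp: S_def f c00_add simp flip: partial_sums_bcf_add)
    show "f (c *\<^sub>R u) = c * f u" if "u \<in> S" for c u
      using that \<phi>_scale by (auto simp: S_def f c00_scale simp flip: partial_sums_bcf_scale)
    show "\<bar>f u\<bar> \<le> \<bar>C\<bar> * norm u" if "u \<in> S" for u
      using that bound by (auto simp: S_def f)
  qed auto
  then show thesis using that f by (simp add: S_def)
qed

lemma block_seq_support_intervals:
  assumes "block_seq v"
  obtains a b :: "nat \<Rightarrow> nat"
  where "\<And>k i. v k i \<noteq> 0 \<Longrightarrow> a k \<le> i \<and> i \<le> b k" "disjoint_family (\<lambda>k. {a k..b k})" "strict_mono b"
proof -
  have finite: "finite {i. v k i \<noteq> 0}" and nonempty: "\<exists>i. v k i \<noteq> 0"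
    and successive: "\<And>i j. v k i \<noteq> 0 \<Longrightarrow> v (Suc k) j \<noteq> 0 \<Longrightarrow> i < j" for k
    using assms unfolding block_seq_def c00_def by blast+
  define a where "a k = (LEAST i. v k i \<noteq> 0)" for k
  define b where "b k = Max {i. v k i \<noteq> 0}" for k
  have supp: "a k \<le> i \<and> i \<le> b k" if "v k i \<noteq> 0" for k i
    unfolding a_def b_def using that finite by (auto intro: Least_le)
  have a_in: "v k (a k) \<noteq> 0" for k
    unfolding a_def using nonempty by (rule LeastI_ex)
  have b_in: "v k (b k) \<noteq> 0" for k
    using Max_in[OF finite] nonempty unfolding b_def by blast
  have "b k < a (Suc k)" for k using successive a_in b_in by blast
  moreover have "a k \<le> b k" for k using supp b_in by blast
  ultimately have step: "b k < b (Suc k)" for k by (meson less_le_trans)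
  then have "strict_mono b" by (rule strict_monoI_Suc)
  have "b k < a k'" if "k < k'" for k k'
  proof -
    obtain d where "k' = Suc (k + d)" using \<open>k < k'\<close> less_iff_Suc_add by blast
    then have "b k \<le> b (k + d)" using \<open>strict_mono b\<close> by (simp add: strict_mono_less_eq)
    also have "\<dots> < a k'" using \<open>b (k + d) < a (Suc (k + d))\<close> \<open>k' = Suc (k + d)\<close> by simp
    finally show ?thesis .
  qed
  then have "{a k..b k} \<inter> {a k'..b k'} = {}" if "k < k'" for k k'
    using that by fastforce
  then have "disjoint_family (\<lambda>k. {a k..b k})"
    unfolding disjoint_family_on_def by (metis Int_commute linorder_neqE_nat)
  then show thesis using that supp \<open>strict_mono b\<close> by blast
qed

theorem proposition18:
  fixes x :: "nat \<Rightarrow> 'a::banach"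
    and v :: "nat \<Rightarrow> nat \<Rightarrow> real"
  assumes sep: "separable_space (euclidean :: 'a topology)"
    and nontriv: "\<exists>y::'a. y \<noteq> 0"
    and x_sphere: "\<forall>n. norm (x n) = 1"
    and x_dense: "sphere 0 1 \<subseteq> closure (range x)"
    and block: "block_seq v"
    and bdd: "\<exists>M. \<forall>k. EX_norm x (v k) \<le> M"
    and Qnull: "weakly_null (\<lambda>k. QX x (v k))"
  shows "EX_weakly_null x v"
  unfolding EX_weakly_null_def
proof (intro allI impI)
  fix \<phi> :: "(nat \<Rightarrow> real) \<Rightarrow> real" and C :: real
  assume "\<forall>z\<in>c00. \<forall>w\<in>c00. \<phi> (\<lambda>n. z n + w n) = \<phi> z + \<phi> w"
    and "\<forall>z\<in>c00. \<forall>c. \<phi> (\<lambda>n. c * z n) = c * \<phi> z" and "\<forall>z\<in>c00. \<bar>\<phi> z\<bar> \<le> C * EX_norm x z"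
  then obtain \<Phi> :: "(nat \<Rightarrow>\<^sub>C 'a) \<Rightarrow> real" where \<Phi>: "linear \<Phi>" "\<And>u. \<bar>\<Phi> u\<bar> \<le> \<bar>C\<bar> * norm u"
    and \<Phi>_\<phi>: "\<And>z. z \<in> c00 \<Longrightarrow> \<Phi> (partial_sums_bcf x z) = \<phi> z"
    by (rule EX_functional_extends_to_bcontfun) auto
  obtain a b where supp: "\<And>k i. v k i \<noteq> 0 \<Longrightarrow> a k \<le> i \<and> i \<le> b k"
    and disjoint: "disjoint_family (\<lambda>k. {a k..b k})" and "strict_mono b"
    using block_seq_support_intervals[OF block] by blast
  obtain M where "\<And>k. EX_norm x (v k) \<le> M" using bdd by blast
  moreover have v_c00: "v k \<in> c00" for k using block unfolding block_seq_def by blast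
  ultimately have partial_sums_le: "norm (partial_sums x (v k) m) \<le> M" for k m
    using norm_partial_sums_le_EX_norm order_trans by blast
  then have "M \<ge> 0" using norm_ge_zero order_trans by blast
  define head where "head k = partial_sums_bcf x (v k) - const_from (Suc (b k)) (QX x (v k))" for k
  have head_apply: "apply_bcontfun (head k) m = (if a k \<le> m \<and> m \<le> b k then partial_sums x (v k) m else 0)"
    for k m
    unfolding head_def by (rule partial_sums_bcf_minus_const_from) (rule supp)
  have "\<phi> (v k) = \<Phi> (head k) + \<Phi> (const_from (Suc (b k)) (QX x (v k)))" for k
    unfolding head_def linear_diff[OF \<Phi>(1)] \<Phi>_\<phi>[OF v_c00] by simp
  moreover have "(\<lambda>k. \<Phi> (head k)) \<longlonglongrightarrow> 0"
    by (rule functional_disjoint_supports_tendsto_zero[OF \<Phi> abs_ge_zero _ disjoint, where B = M])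
      (auto simp: head_apply partial_sums_le \<open>M \<ge> 0\<close>)
  moreover have "(\<lambda>k. \<Phi> (const_from (Suc (b k)) (QX x (v k)))) \<longlonglongrightarrow> 0"
  proof (rule functional_const_from_weakly_null[OF \<Phi> abs_ge_zero Qnull])
    show "norm (QX x (v k)) \<le> M" for k
      using partial_sums_le[of k "b k"] supp partial_sums_eq_QX[of "v k" "b k" x] by simp
    show "filterlim (\<lambda>k. Suc (b k)) sequentially sequentially"
      using \<open>strict_mono b\<close> by (intro filterlim_subseq) (simp add: strict_mono_def)
  qed
  ultimately show "(\<lambda>k. \<phi> (v k)) \<longlonglongrightarrow> 0"
    using tendsto_add_zero by (simp only:)
qed

end
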